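(* Let $(n^{-*},n^{+*})$ be a global optimum of $\max\{\Phi(n^-,n^+): n^-,n^+\in\mathbb{N}\cup\{0\},\ n^-+n^+=N\}$ and suppose the optimal value $\Phi^*=\Phi(n^{-*},n^{+*})$ is positive. Then for every global optimum $(w^{-*},w^{+*})$ of problem $P(n^{-*},n^{+*})$ we have $w^{-*}_i\ne 0$ for all $i\in\{1,\dots,n^{-*}\}$ and $w^{+*}_j\ne 0$ for all $j\in\{1,\dots,n^{+*}\}$.
   Context: Lottery with $N\in\mathbb{N}$ tickets, each outcome having probability $1/N$. Parameters $\alpha,\beta\in(0,1)$, $\lambda>0$; value function $U(x)=x^\alpha$ for $x\ge0$ and $U(x)=-\lambda(-x)^\beta$ for $x<0$. A function $f:[0,1]\to\mathbb{R}$ is inverse S-shaped if it is strictly increasing, continuously differentiable, and there is $x_0\in[0,1]$ such that $f'$ is strictly decreasing on $[0,x_0]$ and strictly increasing on $[x_0,1]$; $W^+,W^-:[0,1]\to[0,1]$ are inverse S-shaped with value $0$ at $0$ and $1$ at $1$. For $n^-+n^+=N$, set $h^-_i=W^-(i/N)-W^-((i-1)/N)$ ($i\le n^-$) and $h^+_j=W^+((n^+-j+1)/N)-W^+((n^+-j)/N)$ ($j\le n^+$). Problem $P(n^-,n^+)$: maximize $\sum_{i=1}^{n^-}(-w^-_i)-\sum_{j=1}^{n^+}w^+_j$ over $w^-\in\mathbb{R}^{n^-}$, $w^+\in\mathbb{R}^{n^+}$ subject to $\sum_{i=1}^{n^-}h^-_iU(w^-_i)+\sum_{j=1}^{n^+}h^+_jU(w^+_j)\ge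 0$, $0\le w^+_1\le\cdots\le w^+_{n^+}$, and $w^-_1\le\cdots\le w^-_{n^-}\le 0$. $\Phi(n^-,n^+)$ denotes its optimal value (with $\Phi(0,N)=\Phi(N,0)=0$). *)

theory Defs
  imports "HOL-Analysis.Analysis"
begin

definition U :: "real \<Rightarrow> real \<Rightarrow> real \<Rightarrow> real \<Rightarrow> real" where
  "U alpha beta lam x = (if x \<ge> 0 then x powr alpha else - lam * ((- x) powr beta))"

definition inverse_S_shaped :: "(real \<Rightarrow> real) \<Rightarrow> bool" where
  "inverse_S_shaped f \<longleftrightarrow>
     strict_mono_on {0..1} f \<and>
     (\<exists>f'. (\<forall>x\<in>{0..1}. (f has_real_derivative f' x) (at x within {0..1})) \<and>
           continuous_on {0..1} f' \<and>
           (\<exists>x0\<in>{0..1}.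
              (\<forall>x\<in>{0..x0}. \<forall>y\<in>{0..x0}. x < y \<longrightarrow> f' y < f' x) \<and>
              (\<forall>x\<in>{x0..1}. \<forall>y\<in>{x0..1}. x < y \<longrightarrow> f' x < f' y)))"

definition hm :: "(real \<Rightarrow> real) \<Rightarrow> nat \<Rightarrow> nat \<Rightarrow> real" where
  "hm Wm N i = Wm (real i / real N) - Wm ((real i - 1) / real N)"

definition hp :: "(real \<Rightarrow> real) \<Rightarrow> nat \<Rightarrow> nat \<Rightarrow> nat \<Rightarrow> real" where
  "hp Wp N np j = Wp ((real np - real j + 1) / real N) - Wp ((real np - real j) / real N)"

text \<open>Vectors w^- in R^{nm}, w^+ in R^{np} are represented as functions on nat,
  only the entries 1..nm resp. 1..np being relevant.\<close>
definition objective :: "nat \<Rightarrow> nat \<Rightarrow> (nat \<Rightarrow> real) \<Rightarrow> (nat \<Rightarrow> real) \<Rightarrow> real" where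
  "objective nm np wm wp = (\<Sum>i=1..nm. - wm i) - (\<Sum>j=1..np. wp j)"

definition feasible ::
  "real \<Rightarrow> real \<Rightarrow> real \<Rightarrow> (real \<Rightarrow> real) \<Rightarrow> (real \<Rightarrow> real) \<Rightarrow> nat \<Rightarrow> nat \<Rightarrow> nat
   \<Rightarrow> (nat \<Rightarrow> real) \<Rightarrow> (nat \<Rightarrow> real) \<Rightarrow> bool" where
  "feasible alpha beta lam Wm Wp N nm np wm wp \<longleftrightarrow>
     (\<Sum>i=1..nm. hm Wm N i * U alpha beta lam (wm i)) +
     (\<Sum>j=1..np. hp Wp N np j * U alpha beta lam (wp j)) \<ge> 0 \<and>
     (np \<ge> 1 \<longrightarrow> 0 \<le> wp 1) \<and>
     (\<forall>j\<in>{1..<np}. wp j \<le> wp (j + 1)) \<and>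
     (\<forall>i\<in>{1..<nm}. wm i \<le> wm (i + 1)) \<and>
     (nm \<ge> 1 \<longrightarrow> wm nm \<le> 0)"

definition is_opt_P ::
  "real \<Rightarrow> real \<Rightarrow> real \<Rightarrow> (real \<Rightarrow> real) \<Rightarrow> (real \<Rightarrow> real) \<Rightarrow> nat \<Rightarrow> nat \<Rightarrow> nat
   \<Rightarrow> (nat \<Rightarrow> real) \<Rightarrow> (nat \<Rightarrow> real) \<Rightarrow> bool" where
  "is_opt_P alpha beta lam Wm Wp N nm np wm wp \<longleftrightarrow>
     feasible alpha beta lam Wm Wp N nm np wm wp \<and>
     (\<forall>vm vp. feasible alpha beta lam Wm Wp N nm np vm vp \<longrightarrow>
        objective nm np vm vp \<le> objective nm np wm wp)"

definition Phi ::
  "real \<Rightarrow> real \<Rightarrow> real \<Rightarrow> (real \<Rightarrow> real) \<Rightarrow> (real \<Rightarrow> real) \<Rightarrow> nat \<Rightarrow> nat \<Rightarrow> nat \<Rightarrow> real" where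
  "Phi alpha beta lam Wm Wp N nm np =
     (if nm = 0 \<or> np = 0 then 0
      else Sup {objective nm np wm wp | wm wp. feasible alpha beta lam Wm Wp N nm np wm wp})"

end

theory Submission
  imports Defs
begin

(* At an optimum (w-, w+) with positive value, first alpha < beta: otherwise scaling the losses
   by 2 powr (1/beta) and the gains by 2 powr (1/alpha) doubles both utility sums, keeps
   feasibility, and multiplies the objective by at least 2 powr (1/alpha) > 1.
   Given alpha < beta, a zero gain can be traded away: lowering the worst loss by d costs
   about lam * d powr beta in utility, raising every gain to at least e earns about
   e powr alpha, and for small e the utilities balance with d much larger than n+ * e,
   so the objective strictly improves. Hence no gain is zero. A zero loss must be the last
   one; turning that outcome into a zero gain is feasible for the split (n- - 1, n+ + 1)
   with the same objective, and the trade then beats Phi*, contradicting the optimality of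
   the split. *)

lemma powr_add_le_add_powr:
  fixes x y p :: real
  assumes "0 \<le> x" "0 \<le> y" "0 < p" "p \<le> 1"
  shows "(x + y) powr p \<le> x powr p + y powr p"
proof (cases "x + y = 0")
  case True
  then show ?thesis using assms by auto
next
  case False
  then have s: "x + y > 0" using assms by auto
  have "x / (x + y) \<le> (x / (x + y)) powr p" "y / (x + y) \<le> (y / (x + y)) powr p"
    using powr_mono'[of p 1 "x / (x + y)"] powr_mono'[of p 1 "y / (x + y)"] assms s by auto
  moreover have "x / (x + y) + y / (x + y) = 1"
    using s by (simp flip: add_divide_distrib)
  ultimately have "(x + y) powr p * 1
                    \<le> (x + y) powr p * ((x / (x + y)) powr p + (y / (x + y)) powr p)"
    by (intro mult_left_mono) auto
  also have "\<dots> = x powr p + y powr p"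
    using s assms by (simp add: powr_divide distrib_left)
  finally show ?thesis by simp
qed

lemma exists_linear_less_powr:
  fixes k c p :: real
  assumes "0 < p" "p < 1" "0 < c"
  shows "\<exists>x>0. k * x < c * x powr p"
proof (cases "k \<le> 0")
  case True
  then show ?thesis using assms by (intro exI[of _ 1]) auto
next
  case False
  define x where "x = (c / (2 * k)) powr (1 / (1 - p))"
  have x: "x > 0" using False assms by (simp add: x_def)
  have "k * x = k * x powr (1 - p) * x powr p"
    using x by (simp add: mult.assoc flip: powr_add)
  also have "x powr (1 - p) = c / (2 * k)"
    using False assms by (simp add: x_def powr_powr)
  also have "k * (c / (2 * k)) * x powr p < c * x powr p"
    using False assms x by simp
  finally show ?thesis using x by blast
qed

lemma linear_diff_le_if_powr_le:
  fixes alpha beta c k M W :: real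
  assumes "0 < alpha" "alpha < beta" "0 < c" "0 < k" "0 \<le> M" "0 \<le> W"
    and dom: "c * M powr beta \<le> W powr alpha"
  shows "k * M - W \<le> k * (k powr alpha / c) powr (1 / (beta - alpha))"
proof (cases "k * M \<le> W")
  case True
  then show ?thesis using assms by (smt (verit) mult_nonneg_nonneg powr_ge_zero)
next
  case False
  then have M: "M > 0" using assms by (cases "M = 0") auto
  have "c * M powr (beta - alpha) * M powr alpha = c * M powr beta"
    using M by (simp add: mult.assoc flip: powr_add)
  also have "\<dots> \<le> (k * M) powr alpha"
    using dom False assms by (smt (verit) powr_mono2)
  also have "\<dots> = k powr alpha * M powr alpha"
    using assms by (simp add: powr_mult)
  finally have "M powr (beta - alpha) \<le> k powr alpha / c"
    using M assms by (simp add: field_simps)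
  then have "(M powr (beta - alpha)) powr (1 / (beta - alpha))
               \<le> (k powr alpha / c) powr (1 / (beta - alpha))"
    using assms by (intro powr_mono2) auto
  then have "M \<le> (k powr alpha / c) powr (1 / (beta - alpha))"
    using M assms by (simp add: powr_powr)
  then show ?thesis using assms by (smt (verit) mult_left_mono)
qed

lemma U_nonneg: "0 \<le> x \<Longrightarrow> U alpha beta lam x = x powr alpha"
  by (simp add: U_def)

lemma U_nonpos: "x \<le> 0 \<Longrightarrow> U alpha beta lam x = - lam * (- x) powr beta"
  by (simp add: U_def)

lemma U_scale_nonneg:
  assumes "0 \<le> x" "0 < alpha" "0 < t"
  shows "U alpha beta lam (t powr (1 / alpha) * x) = t * U alpha beta lam x"
  using assms by (simp add: U_nonneg powr_mult powr_powr)

lemma U_scale_nonpos: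
  assumes "x \<le> 0" "0 < beta" "0 < t"
  shows "U alpha beta lam (t powr (1 / beta) * x) = t * U alpha beta lam x"
proof -
  have "(t powr (1 / beta) * - x) powr beta = t * (- x) powr beta"
    using assms by (subst powr_mult) (auto simp: powr_powr)
  moreover have "t powr (1 / beta) * x \<le> 0"
    using assms by (simp add: mult_nonneg_nonpos)
  ultimately show ?thesis
    using assms by (simp add: U_nonpos)
qed

lemma hm_pos:
  assumes "strict_mono_on {0..1} W" "1 \<le> i" "i \<le> N"
  shows "0 < hm W N i"
proof -
  have "(real i - 1) / real N < real i / real N"
    using assms by (simp add: divide_strict_right_mono)
  moreover have "(real i - 1) / real N \<in> {0..1}" "real i / real N \<in> {0..1}"
    using assms by auto
  ultimately show ?thesis
    unfolding hm_def using assms(1) by (auto simp: strict_mono_on_def)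
qed

lemma hp_pos:
  assumes "strict_mono_on {0..1} W" "1 \<le> j" "j \<le> np" "np \<le> N"
  shows "0 < hp W N np j"
proof -
  have "(real np - real j) / real N < (real np - real j + 1) / real N"
    using assms by (simp add: divide_strict_right_mono)
  moreover have "(real np - real j) / real N \<in> {0..1}"
    "(real np - real j + 1) / real N \<in> {0..1}"
    using assms by auto
  ultimately show ?thesis
    unfolding hp_def using assms(1) by (auto simp: strict_mono_on_def)
qed

lemma hp_le:
  assumes "strict_mono_on {0..1} W" "1 \<le> j" "j \<le> np" "np \<le> N"
  shows "hp W N np j \<le> W 1 - W 0"
proof -
  have "(real np - real j) / real N \<in> {0..1}" "(real np - real j + 1) / real N \<in> {0..1}"
    using assms by auto
  then have "W 0 \<le> W ((real np - real j) / real N)"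
    "W ((real np - real j + 1) / real N) \<le> W 1"
    using strict_mono_on_leD[OF assms(1)] by auto
  then show ?thesis unfolding hp_def by linarith
qed

lemma hp_Suc: "hp W N (Suc np) (Suc j) = hp W N np j"
  by (simp add: hp_def)

lemma feasible_loss_bounds:
  assumes feas: "feasible alpha beta lam Wm Wp N nm np wm wp" and i: "i \<in> {1..nm}"
  shows "wm 1 \<le> wm i" "wm i \<le> wm nm" "wm nm \<le> 0"
proof -
  have step: "\<And>n. n \<in> {1..<nm} \<Longrightarrow> wm n \<le> wm (Suc n)"
    using feas by (simp add: feasible_def)
  show "wm 1 \<le> wm i" "wm i \<le> wm nm"
    using i by (auto intro: lift_Suc_mono_le_ivl[of "{1..<nm}" wm, OF step])
  show "wm nm \<le> 0"
    using feas i by (simp add: feasible_def)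
qed

lemma feasible_gain_bounds:
  assumes feas: "feasible alpha beta lam Wm Wp N nm np wm wp" and j: "j \<in> {1..np}"
  shows "0 \<le> wp 1" "wp 1 \<le> wp j" "wp j \<le> wp np"
proof -
  have step: "\<And>n. n \<in> {1..<np} \<Longrightarrow> wp n \<le> wp (Suc n)"
    using feas by (simp add: feasible_def)
  show "wp 1 \<le> wp j" "wp j \<le> wp np"
    using j by (auto intro: lift_Suc_mono_le_ivl[of "{1..<np}" wp, OF step])
  show "0 \<le> wp 1"
    using feas j by (simp add: feasible_def)
qed

lemma Phi_eq_objective_if_opt:
  assumes "is_opt_P alpha beta lam Wm Wp N nm np wm wp" "1 \<le> nm" "1 \<le> np"
  shows "Phi alpha beta lam Wm Wp N nm np = objective nm np wm wp"
  using assms unfolding Phi_def is_opt_P_def by (auto intro!: cSup_eq_maximum)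

lemma feasible_scale:
  assumes feas: "feasible alpha beta lam Wm Wp N nm np wm wp"
    and "0 < alpha" "0 < beta" "0 < t"
  shows "feasible alpha beta lam Wm Wp N nm np
           (\<lambda>i. t powr (1 / beta) * wm i) (\<lambda>j. t powr (1 / alpha) * wp j)"
proof -
  have loss: "wm i \<le> 0" if "i \<in> {1..nm}" for i
    using feasible_loss_bounds[OF feas that] by linarith
  have gain: "0 \<le> wp j" if "j \<in> {1..np}" for j
    using feasible_gain_bounds[OF feas that] by linarith
  have loss_sum: "(\<Sum>i=1..nm. hm Wm N i * U alpha beta lam (t powr (1 / beta) * wm i))
        = t * (\<Sum>i=1..nm. hm Wm N i * U alpha beta lam (wm i))"
    unfolding sum_distrib_left
    by (rule sum.cong) (use loss assms in \<open>auto simp: U_scale_nonpos\<close>)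
  have gain_sum: "(\<Sum>j=1..np. hp Wp N np j * U alpha beta lam (t powr (1 / alpha) * wp j))
        = t * (\<Sum>j=1..np. hp Wp N np j * U alpha beta lam (wp j))"
    unfolding sum_distrib_left
    by (rule sum.cong) (use gain assms in \<open>auto simp: U_scale_nonneg\<close>)
  show ?thesis
    unfolding feasible_def loss_sum gain_sum
    using feas assms by (auto simp: feasible_def mult_nonneg_nonpos simp flip: distrib_left)
qed

lemma alpha_less_beta_if_opt:
  assumes opt: "is_opt_P alpha beta lam Wm Wp N nm np wm wp"
    and pos: "0 < objective nm np wm wp" and "0 < alpha" "0 < beta"
  shows "alpha < beta"
proof (rule ccontr)
  assume "\<not> alpha < beta"
  define c where "c = (2::real) powr (1 / beta)"
  define d where "d = (2::real) powr (1 / alpha)"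
  have "d \<le> c"
    unfolding c_def d_def using \<open>\<not> alpha < beta\<close> assms
    by (intro powr_mono) (auto simp: divide_simps)
  have "1 < d"
    unfolding d_def using assms by simp
  have feas: "feasible alpha beta lam Wm Wp N nm np wm wp"
    and max: "\<And>vm vp. feasible alpha beta lam Wm Wp N nm np vm vp
                \<Longrightarrow> objective nm np vm vp \<le> objective nm np wm wp"
    using opt by (auto simp: is_opt_P_def)
  define A where "A = (\<Sum>i=1..nm. - wm i)"
  define B where "B = (\<Sum>j=1..np. wp j)"
  have "0 \<le> A"
    unfolding A_def by (rule sum_nonneg) (use feasible_loss_bounds[OF feas] in force)
  have "objective nm np wm wp < d * objective nm np wm wp"
    using pos \<open>1 < d\<close> by simp
  also have "\<dots> \<le> c * A - d * B"
    using \<open>d \<le> c\<close> \<open>0 \<le> A\<close>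
    by (simp add: objective_def A_def B_def algebra_simps mult_right_mono)
  also have "\<dots> = objective nm np (\<lambda>i. c * wm i) (\<lambda>j. d * wp j)"
    by (simp add: objective_def A_def B_def sum_distrib_left)
  also have "\<dots> \<le> objective nm np wm wp"
    using max feasible_scale[OF feas, of 2] assms by (simp add: c_def d_def)
  finally show False by simp
qed

lemma weighted_U_sum_lower_first_loss:
  fixes w u :: "nat \<Rightarrow> real"
  assumes "1 \<le> n" "u 1 \<le> 0" "0 \<le> d" "0 \<le> w 1" "0 < beta" "beta \<le> 1" "0 \<le> lam"
  shows "(\<Sum>i=1..n. w i * U alpha beta lam (u i)) - lam * w 1 * d powr beta
           \<le> (\<Sum>i=1..n. w i * U alpha beta lam ((u(1 := u 1 - d)) i))"
proof -
  have "(- u 1 + d) powr beta \<le> (- u 1) powr beta + d powr beta"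
    using assms by (intro powr_add_le_add_powr) auto
  then have "lam * (- u 1 + d) powr beta \<le> lam * ((- u 1) powr beta + d powr beta)"
    using assms by (intro mult_left_mono) auto
  then have "U alpha beta lam (u 1) - lam * d powr beta \<le> U alpha beta lam (u 1 - d)"
    using assms by (simp add: U_nonpos algebra_simps)
  then have "w 1 * (U alpha beta lam (u 1) - lam * d powr beta)
               \<le> w 1 * U alpha beta lam (u 1 - d)"
    using assms(4) by (rule mult_left_mono)
  moreover have "(\<Sum>i=Suc 1..n. w i * U alpha beta lam ((u(1 := u 1 - d)) i))
                 = (\<Sum>i=Suc 1..n. w i * U alpha beta lam (u i))"
    by (rule sum.cong) auto
  ultimately show ?thesis
    unfolding sum.atLeast_Suc_atMost[OF assms(1)] by (simp add: algebra_simps)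
qed

lemma weighted_U_sum_raise_gains:
  fixes w u :: "nat \<Rightarrow> real"
  assumes "1 \<le> n" "u 1 = 0" "\<And>j. j \<in> {1..n} \<Longrightarrow> 0 \<le> u j \<and> 0 \<le> w j"
    and "0 \<le> e" "0 < alpha"
  shows "(\<Sum>j=1..n. w j * U alpha beta lam (u j)) + w 1 * e powr alpha
           \<le> (\<Sum>j=1..n. w j * U alpha beta lam (max (u j) e))"
proof -
  have "(\<Sum>j=Suc 1..n. w j * U alpha beta lam (u j))
        \<le> (\<Sum>j=Suc 1..n. w j * U alpha beta lam (max (u j) e))"
  proof (rule sum_mono)
    fix j assume "j \<in> {Suc 1..n}"
    with assms have "0 \<le> u j" "0 \<le> w j" by auto
    then show "w j * U alpha beta lam (u j) \<le> w j * U alpha beta lam (max (u j) e)"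
      using assms by (auto simp: U_nonneg intro!: mult_left_mono powr_mono2)
  qed
  then show ?thesis
    unfolding sum.atLeast_Suc_atMost[OF assms(1)] using assms by (simp add: U_nonneg)
qed

lemma feasible_improve_if_first_gain_zero:
  assumes "0 < alpha" "alpha < beta" "beta \<le> 1" "0 < lam"
    and smono: "strict_mono_on {0..1} Wm" "strict_mono_on {0..1} Wp"
    and nm: "1 \<le> nm" and np: "1 \<le> np" and N: "nm + np \<le> N"
    and feas: "feasible alpha beta lam Wm Wp N nm np um up" and zero: "up 1 = 0"
  obtains vm vp where "feasible alpha beta lam Wm Wp N nm np vm vp"
    "objective nm np um up < objective nm np vm vp"
proof -
  define g where "g = hm Wm N 1"
  define h where "h = hp Wp N np 1"
  have g: "0 < g" and h: "0 < h"
    using hm_pos[OF smono(1)] hp_pos[OF smono(2)] nm np N by (auto simp: g_def h_def)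
  define c where "c = (h / (lam * g)) powr (1 / beta)"
  have c: "0 < c"
    using g h assms by (simp add: c_def)
  obtain e where e: "0 < e" "real np * e < c * e powr (alpha / beta)"
    using exists_linear_less_powr[of "alpha / beta" c "real np"] c assms by auto
  define d where "d = c * e powr (alpha / beta)"
  have d: "0 < d"
    using c e by (simp add: d_def)
  have trade: "lam * g * d powr beta = h * e powr alpha"
    using g h e assms by (simp add: d_def c_def powr_mult powr_powr)
  define vm where "vm = um(1 := um 1 - d)"
  define vp where "vp = (\<lambda>j. max (up j) e)"
  have um1: "um 1 \<le> 0"
    using feasible_loss_bounds[OF feas, of 1] nm by auto
  have up: "0 \<le> up j" if "j \<in> {1..np}" for j
    using feasible_gain_bounds[OF feas that] by linarith
  have loss: "(\<Sum>i=1..nm. hm Wm N i * U alpha beta lam (um i)) - lam * g * d powr beta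
        \<le> (\<Sum>i=1..nm. hm Wm N i * U alpha beta lam (vm i))"
    unfolding vm_def g_def
    using weighted_U_sum_lower_first_loss[of nm um d "hm Wm N" beta lam alpha] nm um1 g d assms
    by (simp add: g_def)
  have gain: "(\<Sum>j=1..np. hp Wp N np j * U alpha beta lam (up j)) + h * e powr alpha
        \<le> (\<Sum>j=1..np. hp Wp N np j * U alpha beta lam (vp j))"
    unfolding vp_def h_def
    using weighted_U_sum_raise_gains[of np up "hp Wp N np" e alpha beta lam]
      zero np up hp_pos[OF smono(2)] N e assms
    by (simp add: less_imp_le)
  have "feasible alpha beta lam Wm Wp N nm np vm vp"
    unfolding feasible_def
  proof (intro conjI)
    show "0 \<le> (\<Sum>i=1..nm. hm Wm N i * U alpha beta lam (vm i))
             + (\<Sum>j=1..np. hp Wp N np j * U alpha beta lam (vp j))"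
      using loss gain trade feas unfolding feasible_def by linarith
    show "\<forall>i\<in>{1..<nm}. vm i \<le> vm (i + 1)" "1 \<le> nm \<longrightarrow> vm nm \<le> 0"
      using feas um1 d unfolding feasible_def by (force simp: vm_def)+
    show "1 \<le> np \<longrightarrow> 0 \<le> vp 1" "\<forall>j\<in>{1..<np}. vp j \<le> vp (j + 1)"
      using feas e unfolding feasible_def by (auto simp: vp_def)
  qed
  moreover have "objective nm np um up < objective nm np vm vp"
  proof -
    have "(\<Sum>i=Suc 1..nm. - vm i) = (\<Sum>i=Suc 1..nm. - um i)"
      by (rule sum.cong) (auto simp: vm_def)
    then have "(\<Sum>i=1..nm. - vm i) = (\<Sum>i=1..nm. - um i) + d"
      unfolding sum.atLeast_Suc_atMost[OF nm] by (simp add: vm_def)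
    moreover have "(\<Sum>j=1..np. vp j) \<le> (\<Sum>j=1..np. up j + e)"
      by (rule sum_mono) (use up e in \<open>auto simp: vp_def\<close>)
    ultimately show ?thesis
      using e d_def by (simp add: objective_def sum.distrib)
  qed
  ultimately show ?thesis
    using that by blast
qed

lemma is_opt_P_gains_nonzero:
  assumes "0 < alpha" "alpha < beta" "beta \<le> 1" "0 < lam"
    and "strict_mono_on {0..1} Wm" "strict_mono_on {0..1} Wp"
    and "1 \<le> nm" "1 \<le> np" "nm + np \<le> N"
    and opt: "is_opt_P alpha beta lam Wm Wp N nm np wm wp" and j: "j \<in> {1..np}"
  shows "wp j \<noteq> 0"
proof
  assume "wp j = 0"
  have feas: "feasible alpha beta lam Wm Wp N nm np wm wp"
    using opt by (simp add: is_opt_P_def)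
  with \<open>wp j = 0\<close> have "wp 1 = 0"
    using feasible_gain_bounds[OF feas j] by simp
  then obtain vm vp where "feasible alpha beta lam Wm Wp N nm np vm vp"
    and "objective nm np wm wp < objective nm np vm vp"
    using feasible_improve_if_first_gain_zero[OF assms(1-9) feas] by blast
  with opt show False
    by (auto simp: is_opt_P_def not_le[symmetric])
qed

lemma bdd_above_feasible_objectives:
  assumes "0 < alpha" "alpha < beta" "0 < lam"
    and smono: "strict_mono_on {0..1} Wm" "strict_mono_on {0..1} Wp"
    and nm: "1 \<le> nm" and np: "1 \<le> np" and N: "nm + np \<le> N"
  shows "bdd_above {objective nm np vm vp | vm vp. feasible alpha beta lam Wm Wp N nm np vm vp}"
proof -
  define g where "g = hm Wm N 1"
  define H where "H = Wp 1 - Wp 0"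
  have g: "0 < g"
    using hm_pos[OF smono(1)] nm N by (simp add: g_def)
  have H: "0 < H"
    using smono(2) by (simp add: H_def strict_mono_on_def)
  define c where "c = lam * g / (real np * H)"
  have c: "0 < c"
    using assms g H by (simp add: c_def)
  define K where "K = real nm * (real nm powr alpha / c) powr (1 / (beta - alpha))"
  show ?thesis
  proof (rule bdd_aboveI[where M = K], clarify)
    fix vm vp
    assume feas: "feasible alpha beta lam Wm Wp N nm np vm vp"
    define M where "M = - vm 1"
    define W where "W = vp np"
    have vm: "vm 1 \<le> vm i" "vm i \<le> 0" if "i \<in> {1..nm}" for i
      using feasible_loss_bounds[OF feas that] by auto
    have vp: "0 \<le> vp j" "vp j \<le> W" if "j \<in> {1..np}" for j
      using feasible_gain_bounds[OF feas that] by (auto simp: W_def)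
    have M: "0 \<le> M"
      using vm[of 1] nm by (simp add: M_def)
    have W: "0 \<le> W"
      using vp[of np] np by simp
    have "(\<Sum>i=1..nm. hm Wm N i * U alpha beta lam (vm i)) \<le> - lam * g * M powr beta"
    proof -
      have "(\<Sum>i=Suc 1..nm. hm Wm N i * U alpha beta lam (vm i)) \<le> 0"
      proof (rule sum_nonpos)
        fix i
        assume i: "i \<in> {Suc 1..nm}"
        then have "0 \<le> hm Wm N i"
          using hm_pos[OF smono(1), of i N] N by auto
        moreover have "U alpha beta lam (vm i) \<le> 0"
          using vm(2)[of i] i assms by (simp add: U_nonpos)
        ultimately show "hm Wm N i * U alpha beta lam (vm i) \<le> 0"
          by (rule mult_nonneg_nonpos)
      qed
      then show ?thesis
        unfolding sum.atLeast_Suc_atMost[OF nm] using vm[of 1] nm by (simp add: U_nonpos M_def g_def)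
    qed
    moreover have "(\<Sum>j=1..np. hp Wp N np j * U alpha beta lam (vp j)) \<le> real np * (H * W powr alpha)"
    proof -
      have "(\<Sum>j=1..np. hp Wp N np j * U alpha beta lam (vp j)) \<le> real (card {1..np}) * (H * W powr alpha)"
      proof (rule sum_bounded_above)
        fix j
        assume j: "j \<in> {1..np}"
        have "hp Wp N np j \<le> H" "0 \<le> hp Wp N np j"
          using hp_le[OF smono(2)] hp_pos[OF smono(2)] j N by (auto simp: H_def less_imp_le)
        moreover have "U alpha beta lam (vp j) \<le> W powr alpha" "0 \<le> U alpha beta lam (vp j)"
          using vp[OF j] assms by (auto simp: U_nonneg intro: powr_mono2)
        ultimately show "hp Wp N np j * U alpha beta lam (vp j) \<le> H * W powr alpha"
          by (intro mult_mono) auto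
      qed
      then show ?thesis by simp
    qed
    ultimately have "lam * g * M powr beta \<le> real np * H * W powr alpha"
      using feas unfolding feasible_def by (simp add: mult.assoc)
    then have "c * M powr beta \<le> W powr alpha"
      using np H by (simp add: c_def field_simps)
    then have "real nm * M - W \<le> K"
      unfolding K_def using linear_diff_le_if_powr_le[of alpha beta c "real nm" M W] assms c nm M W
      by simp
    moreover have "(\<Sum>i=1..nm. - vm i) \<le> real nm * M"
      using sum_bounded_above[of "{1..nm}" "\<lambda>i. - vm i" M] vm by (simp add: M_def)
    moreover have "W \<le> (\<Sum>j=1..np. vp j)"
      unfolding W_def by (rule member_le_sum) (use vp np in auto)
    ultimately show "objective nm np vm vp \<le> K"
      by (simp add: objective_def)
  qed
qed

lemma objective_le_Phi:
  assumes "0 < alpha" "alpha < beta" "0 < lam"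
    and "strict_mono_on {0..1} Wm" "strict_mono_on {0..1} Wp"
    and "1 \<le> nm" "1 \<le> np" "nm + np \<le> N"
    and "feasible alpha beta lam Wm Wp N nm np wm wp"
  shows "objective nm np wm wp \<le> Phi alpha beta lam Wm Wp N nm np"
  unfolding Phi_def using assms bdd_above_feasible_objectives[OF assms(1-8)]
  by (auto intro!: cSup_upper)

definition prepend_zero :: "(nat \<Rightarrow> real) \<Rightarrow> nat \<Rightarrow> real" where
  "prepend_zero w j = (if j \<le> 1 then 0 else w (j - 1))"

lemma sum_prepend_zero:
  fixes f :: "nat \<Rightarrow> real \<Rightarrow> real"
  assumes "f 1 0 = 0"
  shows "(\<Sum>j=1..Suc n. f j (prepend_zero w j)) = (\<Sum>j=1..n. f (Suc j) (w j))"
proof -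
  have "(\<Sum>j=1..Suc n. f j (prepend_zero w j))
        = f 1 (prepend_zero w 1) + (\<Sum>j=Suc 1..Suc n. f j (prepend_zero w j))"
    by (rule sum.atLeast_Suc_atMost) simp
  also have "(\<Sum>j=Suc 1..Suc n. f j (prepend_zero w j)) = (\<Sum>j=1..n. f (Suc j) (prepend_zero w (Suc j)))"
    by (rule sum.shift_bounds_cl_Suc_ivl)
  also have "\<dots> = (\<Sum>j=1..n. f (Suc j) (w j))"
    by (rule sum.cong) (auto simp: prepend_zero_def)
  finally show ?thesis
    using assms by (simp add: prepend_zero_def)
qed

lemma feasible_move_zero_loss_to_gains:
  assumes feas: "feasible alpha beta lam Wm Wp N (Suc nm) np wm wp" and last: "wm (Suc nm) = 0"
  shows "feasible alpha beta lam Wm Wp N nm (Suc np) wm (prepend_zero wp)"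
    and "objective nm (Suc np) wm (prepend_zero wp) = objective (Suc nm) np wm wp"
proof -
  have "(\<Sum>j=1..Suc np. hp Wp N (Suc np) j * U alpha beta lam (prepend_zero wp j))
        = (\<Sum>j=1..np. hp Wp N np j * U alpha beta lam (wp j))"
    by (subst sum_prepend_zero) (simp_all add: U_nonneg hp_Suc)
  moreover have "(\<Sum>i=1..Suc nm. hm Wm N i * U alpha beta lam (wm i))
        = (\<Sum>i=1..nm. hm Wm N i * U alpha beta lam (wm i))"
    using last by (simp add: U_nonneg)
  moreover have "wm nm \<le> 0" if "1 \<le> nm"
    using feasible_loss_bounds[OF feas, of nm] last that by simp
  moreover have "prepend_zero wp j \<le> prepend_zero wp (Suc j)" if j: "j \<in> {1..<Suc np}" for j
  proof (cases "j = 1")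
    case True
    then show ?thesis
      using feasible_gain_bounds[OF feas, of 1] j by (simp add: prepend_zero_def)
  next
    case False
    then have "j - 1 \<in> {1..<np}"
      using j by auto
    then have "wp (j - 1) \<le> wp (j - 1 + 1)"
      using feas unfolding feasible_def by blast
    then show ?thesis
      using False j by (simp add: prepend_zero_def)
  qed
  ultimately show "feasible alpha beta lam Wm Wp N nm (Suc np) wm (prepend_zero wp)"
    using feas by (auto simp: feasible_def prepend_zero_def)
  have "(\<Sum>j=1..Suc np. prepend_zero wp j) = (\<Sum>j=1..np. wp j)"
    by (rule sum_prepend_zero[where f = "\<lambda>_ x. x"]) simp
  then show "objective nm (Suc np) wm (prepend_zero wp) = objective (Suc nm) np wm wp"
    using last by (simp add: objective_def)
qed

lemma objective_lt_Phi_if_last_loss_zero: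
  assumes "0 < alpha" "alpha < beta" "beta \<le> 1" "0 < lam"
    and smono: "strict_mono_on {0..1} Wm" "strict_mono_on {0..1} Wp"
    and N: "Suc nm + np \<le> N"
    and feas: "feasible alpha beta lam Wm Wp N (Suc nm) np wm wp" and last: "wm (Suc nm) = 0"
    and pos: "0 < objective (Suc nm) np wm wp"
  shows "objective (Suc nm) np wm wp < Phi alpha beta lam Wm Wp N nm (Suc np)"
proof -
  have nm: "1 \<le> nm"
  proof (rule ccontr)
    assume "\<not> 1 \<le> nm"
    then have "objective (Suc nm) np wm wp = - (\<Sum>j=1..np. wp j)"
      using last by (simp add: objective_def)
    also have "\<dots> \<le> 0"
      using feasible_gain_bounds[OF feas] by (smt (verit) sum_nonneg)
    finally show False
      using pos by simp
  qed
  note shifted = feasible_move_zero_loss_to_gains[OF feas last]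
  have "nm + Suc np \<le> N" "prepend_zero wp 1 = 0"
    using N by (simp_all add: prepend_zero_def)
  then obtain vm vp where better: "feasible alpha beta lam Wm Wp N nm (Suc np) vm vp"
    "objective nm (Suc np) wm (prepend_zero wp) < objective nm (Suc np) vm vp"
    using feasible_improve_if_first_gain_zero[OF assms(1-4) smono nm _ _ shifted(1)] by auto
  have "objective nm (Suc np) vm vp \<le> Phi alpha beta lam Wm Wp N nm (Suc np)"
    using objective_le_Phi[OF assms(1,2,4) smono nm _ \<open>nm + Suc np \<le> N\<close> better(1)] by simp
  then show ?thesis
    using better(2) shifted(2) by simp
qed

theorem proposition1:
  fixes alpha beta lam :: real and Wm Wp :: "real \<Rightarrow> real" and N nms nps :: nat
    and wm wp :: "nat \<Rightarrow> real"
  assumes N: "N \<ge> 1"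
    and alpha: "0 < alpha" "alpha < 1" and beta: "0 < beta" "beta < 1" and lam: "lam > 0"
    and Wp: "inverse_S_shaped Wp" "Wp 0 = 0" "Wp 1 = 1" "\<forall>x\<in>{0..1}. Wp x \<in> {0..1}"
    and Wm: "inverse_S_shaped Wm" "Wm 0 = 0" "Wm 1 = 1" "\<forall>x\<in>{0..1}. Wm x \<in> {0..1}"
    and sum: "nms + nps = N"
    and glob: "\<forall>a b. a + b = N \<longrightarrow>
                 Phi alpha beta lam Wm Wp N a b \<le> Phi alpha beta lam Wm Wp N nms nps"
    and pos: "Phi alpha beta lam Wm Wp N nms nps > 0"
    and opt: "is_opt_P alpha beta lam Wm Wp N nms nps wm wp"
  shows "(\<forall>i\<in>{1..nms}. wm i \<noteq> 0) \<and> (\<forall>j\<in>{1..nps}. wp j \<noteq> 0)"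
proof -
  have smono: "strict_mono_on {0..1} Wm" "strict_mono_on {0..1} Wp"
    using Wm(1) Wp(1) by (simp_all add: inverse_S_shaped_def)
  have nms: "1 \<le> nms" and nps: "1 \<le> nps"
    using pos by (auto simp: Phi_def split: if_splits)
  have feas: "feasible alpha beta lam Wm Wp N nms nps wm wp"
    using opt by (simp add: is_opt_P_def)
  have Phi_opt: "Phi alpha beta lam Wm Wp N nms nps = objective nms nps wm wp"
    using Phi_eq_objective_if_opt[OF opt nms nps] .
  with pos have obj_pos: "0 < objective nms nps wm wp"
    by simp
  have alpha_beta: "alpha < beta"
    using alpha_less_beta_if_opt[OF opt obj_pos alpha(1) beta(1)] .
  have "\<forall>j\<in>{1..nps}. wp j \<noteq> 0"
    using is_opt_P_gains_nonzero[OF alpha(1) alpha_beta less_imp_le[OF beta(2)] lam smono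
        nms nps eq_refl[OF sum] opt] by blast
  moreover have "wm i \<noteq> 0" if "i \<in> {1..nms}" for i
  proof
    assume "wm i = 0"
    then have last: "wm nms = 0"
      using feasible_loss_bounds[OF feas that] by simp
    obtain a where a: "nms = Suc a"
      using nms by (cases nms) auto
    have "objective nms nps wm wp < Phi alpha beta lam Wm Wp N a (Suc nps)"
      unfolding a
      by (rule objective_lt_Phi_if_last_loss_zero)
        (use alpha beta lam smono feas last obj_pos a sum alpha_beta in auto)
    also have "\<dots> \<le> objective nms nps wm wp"
      using glob a sum Phi_opt by simp
    finally show False by simp
  qed
  ultimately show ?thesis by blast
qed

end
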